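(* Let $f$ be a real entire function of genus $1$ with only negative zeros and with $f(0)>0$. For $s>0$ the function $$h(x)=(\log f)'(x)-(\log f)'(x+s),\qquad x>0,$$ is a generalized Stieltjes function of order $2$.
   Context: A generalized Stieltjes function of order $2$ is a function $F(x)=\int_0^\infty\frac{d\mu(t)}{(x+t)^2}+c$ on $(0,\infty)$ with $\mu$ a positive measure on $[0,\infty)$ making the integral converge and $c\geq0$. *)

theory Defs
  imports "HOL-Complex_Analysis.Complex_Analysis" "HOL-Computational_Algebra.Polynomial"
begin

text \<open>Genus of an entire function via its Hadamard/Weierstrass representation
  f(z) = z^m e^{Q(z)} prod_n E_p(z / a_n), where the zeros a_n are encoded by their
  reciprocals w n = 1 / a_n (w n = 0 encodes "no zero", allowing finitely many zeros),
  p is the least natural number with sum |a_n|^-(p+1) < infinity, Q a polynomial,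
  and the genus is max p (deg Q).\<close>

definition has_genus :: "(complex \<Rightarrow> complex) \<Rightarrow> nat \<Rightarrow> bool" where
  "has_genus f g \<longleftrightarrow>
     (\<exists>(m::nat) (Q::complex poly) (w::nat \<Rightarrow> complex) (p::nat).
        summable (\<lambda>n. norm (w n) ^ (p + 1)) \<and>
        (\<forall>q<p. \<not> summable (\<lambda>n. norm (w n) ^ (q + 1))) \<and>
        (\<forall>z. f z = z ^ m * exp (poly Q z) * (\<Prod>n. weierstrass_factor p (z * w n))) \<and>
        g = max p (degree Q))"

definition real_entire :: "(complex \<Rightarrow> complex) \<Rightarrow> bool" where
  "real_entire f \<longleftrightarrow> f holomorphic_on UNIV \<and> (\<forall>x::real. f (of_real x) \<in> \<real>)"

definition gen_stieltjes2 :: "(real \<Rightarrow> real) \<Rightarrow> bool" where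
  "gen_stieltjes2 F \<longleftrightarrow>
     (\<exists>(\<mu>::real measure) (c::real).
        sets \<mu> = sets borel \<and> emeasure \<mu> {..<0} = 0 \<and> c \<ge> 0 \<and>
        (\<forall>x>0. integrable \<mu> (\<lambda>t. 1 / (x + t) ^ 2) \<and>
               F x = (\<integral>t. 1 / (x + t) ^ 2 \<partial>\<mu>) + c))"

end

theory Submission
  imports Defs
begin

(* Write f(z) = e^{Q(z)} \<Prod> E_p(z w_n) with p, deg Q \<le> 1; the zeros 1/w_n are negative, so
   w_n = -r_n with r_n \<ge> 0. The partial products converge locally uniformly, so the
   logarithmic derivative may be taken termwise: (log f)'(x) = Q' + \<Sum> (r_n/(1 + x r_n) - p r_n).
   The constant Q' and the p r_n cancel in h, leaving the sum over r_n > 0 of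
   1/(x + a_n) - 1/(x + a_n + s) with a_n = 1/r_n, and each summand is the integral of (x + t)^-2
   over [a_n, a_n + s]. So h is the transform of the sum of the Lebesgue measures on these
   intervals, with c = 0. *)

lemma has_field_derivative_weierstrass_factor:
  "(weierstrass_factor p has_field_derivative - (z ^ p * exp (\<Sum>k=1..p. z ^ k / of_nat k))) (at z)"
proof -
  define S where "S = (\<Sum>k=1..p. z ^ (k - 1))"
  have "(weierstrass_factor p has_field_derivative
          exp (\<Sum>k=1..p. z ^ k / of_nat k) * ((1 - z) * S - 1)) (at z)"
    unfolding weierstrass_factor_def[abs_def] S_def
    by (rule derivative_eq_intros refl | simp add: algebra_simps)+
  moreover have "(1 - z) * S = 1 - z ^ p"
    by (simp add: S_def one_diff_power_eq sum.atLeast1_atMost_eq)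
  ultimately show ?thesis
    by (simp add: mult.commute)
qed

lemma logderiv_weierstrass_factor_scaled:
  assumes "z * w \<noteq> 1"
  shows "deriv (\<lambda>z. weierstrass_factor p (z * w)) z / weierstrass_factor p (z * w)
           = - w * (z * w) ^ p / (1 - z * w)"
proof -
  have "((\<lambda>z. weierstrass_factor p (z * w)) has_field_derivative
          - ((z * w) ^ p * exp (\<Sum>k=1..p. (z * w) ^ k / of_nat k)) * w) (at z)"
    by (rule DERIV_chain2[OF has_field_derivative_weierstrass_factor])
       (rule derivative_eq_intros refl | simp)+
  then show ?thesis
    using assms by (simp add: DERIV_imp_deriv weierstrass_factor_def field_simps)
qed

lemma eventually_weierstrass_factor_bound:
  fixes w :: "nat \<Rightarrow> complex"
  assumes "summable (\<lambda>n. norm (w n) ^ (p + 1))" and "R > 0"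
  shows "eventually (\<lambda>n. \<forall>z\<in>cball 0 R.
           norm (weierstrass_factor p (z * w n) - 1) \<le> 3 * (R * norm (w n)) ^ Suc p) sequentially"
proof -
  have "0 < (1 / (2 * R)) ^ (p + 1)"
    using assms(2) by (intro zero_less_power) simp
  with summable_LIMSEQ_zero[OF assms(1)]
  have "eventually (\<lambda>n. norm (w n) ^ (p + 1) < (1 / (2 * R)) ^ (p + 1)) sequentially"
    by (rule order_tendstoD(2))
  then show ?thesis
  proof eventually_elim
    case (elim n)
    then have small: "R * norm (w n) \<le> 1 / 2"
      using assms(2) power_less_imp_less_base[OF elim] by (simp add: field_simps)
    show ?case
    proof
      fix z :: complex assume "z \<in> cball 0 R"
      then have zw: "norm (z * w n) \<le> R * norm (w n)"
        by (simp add: norm_mult mult_right_mono)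
      have "norm (weierstrass_factor p (z * w n) - 1) \<le> 3 * norm (z * w n) ^ Suc p"
        using zw small by (intro weierstrass_factor_bound) simp
      also have "\<dots> \<le> 3 * (R * norm (w n)) ^ Suc p"
        using zw by (intro mult_left_mono power_mono) simp_all
      finally show "norm (weierstrass_factor p (z * w n) - 1) \<le> 3 * (R * norm (w n)) ^ Suc p" .
    qed
  qed
qed

lemma summable_weierstrass_majorant:
  assumes "summable (\<lambda>n. norm (w n) ^ (p + 1))"
  shows "summable (\<lambda>n. 3 * (R * norm (w n)) ^ Suc p)"
proof -
  have "summable (\<lambda>n. (3 * R ^ Suc p) * norm (w n) ^ (p + 1))"
    by (rule summable_mult[OF assms])
  then show ?thesis
    by (simp only: power_mult_distrib Suc_eq_plus1 mult.assoc)
qed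

lemma weierstrass_product_has_prod:
  fixes w :: "nat \<Rightarrow> complex"
  assumes "summable (\<lambda>n. norm (w n) ^ (p + 1))"
  shows "(\<lambda>n. weierstrass_factor p (z * w n)) has_prod (\<Prod>n. weierstrass_factor p (z * w n))"
proof -
  have "abs_convergent_prod (\<lambda>n. weierstrass_factor p (z * w n))"
    unfolding abs_convergent_prod_conv_summable
  proof (rule summable_comparison_test_ev)
    have R: "norm z + 1 > 0"
      by (simp add: add_nonneg_pos)
    show "eventually (\<lambda>n. norm (norm (weierstrass_factor p (z * w n) - 1))
            \<le> 3 * ((norm z + 1) * norm (w n)) ^ Suc p) sequentially"
      using eventually_weierstrass_factor_bound[OF assms R] by (rule eventually_mono) simp
  qed (rule summable_weierstrass_majorant[OF assms])
  then show ?thesis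
    using abs_convergent_prod_imp_convergent_prod convergent_prod_has_prod by blast
qed

lemma weierstrass_product_uniform_limit:
  fixes w :: "nat \<Rightarrow> complex"
  assumes "summable (\<lambda>n. norm (w n) ^ (p + 1))" and "R > 0"
  shows "uniform_limit (cball 0 R) (\<lambda>N z. \<Prod>n<N. weierstrass_factor p (z * w n))
           (\<lambda>z. \<Prod>n. weierstrass_factor p (z * w n)) sequentially"
proof -
  have "uniformly_convergent_on (cball 0 R) (\<lambda>N z. \<Prod>n<N. weierstrass_factor p (z * w n))"
  proof (rule uniformly_convergent_on_prod')
    show "uniformly_convergent_on (cball 0 R)
            (\<lambda>N z. \<Sum>n<N. norm (weierstrass_factor p (z * w n) - 1))"
    proof (rule Weierstrass_m_test'_ev)
      show "summable (\<lambda>n. 3 * (R * norm (w n)) ^ Suc p)"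
        by (rule summable_weierstrass_majorant[OF assms(1)])
    qed (use eventually_weierstrass_factor_bound[OF assms] in simp)
  next
    fix n
    show "continuous_on (cball 0 R) (\<lambda>z. weierstrass_factor p (z * w n))"
      by (intro continuous_intros)
  qed simp
  then obtain g where g: "uniform_limit (cball 0 R)
      (\<lambda>N z. \<Prod>n<N. weierstrass_factor p (z * w n)) g sequentially"
    unfolding uniformly_convergent_on_def by blast
  also have "?this \<longleftrightarrow> ?thesis"
  proof (intro uniform_limit_cong)
    fix z :: complex assume "z \<in> cball 0 R"
    have "(\<lambda>N. \<Prod>n<Suc N. weierstrass_factor p (z * w n)) \<longlonglongrightarrow> g z"
      using tendsto_uniform_limitI[OF g \<open>z \<in> cball 0 R\<close>] by (rule LIMSEQ_Suc)
    moreover have "(\<lambda>N. \<Prod>n<Suc N. weierstrass_factor p (z * w n))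
                     \<longlonglongrightarrow> (\<Prod>n. weierstrass_factor p (z * w n))"
      using weierstrass_product_has_prod[OF assms(1), of z]
      unfolding lessThan_Suc_atMost by (simp add: has_prod_iff convergent_prod_LIMSEQ)
    ultimately show "g z = (\<Prod>n. weierstrass_factor p (z * w n))"
      by (rule LIMSEQ_unique)
  qed auto
  finally show ?thesis .
qed

lemma weierstrass_product_holomorphic:
  fixes w :: "nat \<Rightarrow> complex"
  assumes "summable (\<lambda>n. norm (w n) ^ (p + 1))"
  shows "(\<lambda>z. \<Prod>n. weierstrass_factor p (z * w n)) holomorphic_on A"
proof (rule holomorphic_on_subset[of _ UNIV])
  show "(\<lambda>z. \<Prod>n. weierstrass_factor p (z * w n)) holomorphic_on UNIV"
  proof (rule holomorphic_uniform_sequence)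
    fix z :: complex
    have R: "norm z + 1 > 0"
      by (simp add: add_nonneg_pos)
    have "uniform_limit (cball z 1) (\<lambda>N z. \<Prod>n<N. weierstrass_factor p (z * w n))
            (\<lambda>z. \<Prod>n. weierstrass_factor p (z * w n)) sequentially"
      by (rule uniform_limit_on_subset[OF weierstrass_product_uniform_limit[OF assms R]])
         (simp add: cball_subset_cball_iff)
    then show "\<exists>d>0. cball z d \<subseteq> UNIV \<and> uniform_limit (cball z d)
                 (\<lambda>N z. \<Prod>n<N. weierstrass_factor p (z * w n))
                 (\<lambda>z. \<Prod>n. weierstrass_factor p (z * w n)) sequentially"
      by (intro exI[of _ 1]) auto
  qed (auto intro!: holomorphic_intros)
qed auto

lemma weierstrass_product_eq_0_iff:
  fixes w :: "nat \<Rightarrow> complex"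
  assumes "summable (\<lambda>n. norm (w n) ^ (p + 1))"
  shows "(\<Prod>n. weierstrass_factor p (z * w n)) = 0 \<longleftrightarrow> (\<exists>n. z * w n = 1)"
  using has_prod_eq_0_iff[OF weierstrass_product_has_prod[OF assms, of z]]
  by (metis (mono_tags, lifting) rangeE rangeI weierstrass_factor_eq_0_iff)

lemma weierstrass_product_logderiv_sums:
  fixes w :: "nat \<Rightarrow> complex" and p :: nat
  defines "F \<equiv> \<lambda>z. \<Prod>n. weierstrass_factor p (z * w n)"
  assumes "summable (\<lambda>n. norm (w n) ^ (p + 1))" and "F z \<noteq> 0"
  shows "(\<lambda>n. - w n * (z * w n) ^ p / (1 - z * w n)) sums (deriv F z / F z)"
proof -
  have R: "norm z + 1 > 0"
    by (simp add: add_nonneg_pos)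
  have "(\<lambda>n. deriv (\<lambda>z. weierstrass_factor p (z * w n)) z / weierstrass_factor p (z * w n))
          sums (deriv F z / F z)"
  proof (rule logderiv_prodinf_complex_uniform_limit)
    show "uniform_limit (ball 0 (norm z + 1))
            (\<lambda>N z. \<Prod>n<N. weierstrass_factor p (z * w n)) F sequentially"
      unfolding F_def
      by (rule uniform_limit_on_subset[OF weierstrass_product_uniform_limit[OF assms(2) R]]) auto
  next
    fix n
    show "(\<lambda>z. weierstrass_factor p (z * w n)) holomorphic_on ball 0 (norm z + 1)"
      by (intro holomorphic_intros)
  qed (use assms(3) in simp_all)
  moreover have "deriv (\<lambda>z. weierstrass_factor p (z * w n)) z / weierstrass_factor p (z * w n)
                   = - w n * (z * w n) ^ p / (1 - z * w n)" for n
  proof (rule logderiv_weierstrass_factor_scaled)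
    show "z * w n \<noteq> 1"
      using assms(3) weierstrass_product_eq_0_iff[OF assms(2)] by (auto simp: F_def)
  qed
  ultimately show ?thesis
    by simp
qed

lemma logderiv_exp_poly_mult:
  fixes Q :: "complex poly"
  assumes "F field_differentiable at z" and "F z \<noteq> 0"
  shows "deriv (\<lambda>z. exp (poly Q z) * F z) z / (exp (poly Q z) * F z)
           = poly (pderiv Q) z + deriv F z / F z"
proof -
  have "((\<lambda>z. exp (poly Q z) * F z) has_field_derivative
          exp (poly Q z) * poly (pderiv Q) z * F z + deriv F z * exp (poly Q z)) (at z)"
    using assms(1) unfolding DERIV_deriv_iff_field_differentiable[symmetric]
    by (intro DERIV_mult DERIV_chain2[OF DERIV_exp] poly_DERIV)
  then show ?thesis
    using assms(2) by (simp add: DERIV_imp_deriv field_simps)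
qed

lemma logderiv_exp_poly_weierstrass_product_sums:
  fixes w :: "nat \<Rightarrow> complex" and Q :: "complex poly"
  assumes "summable (\<lambda>n. norm (w n) ^ (p + 1))"
    and f: "\<And>z. f z = exp (poly Q z) * (\<Prod>n. weierstrass_factor p (z * w n))"
    and "f z \<noteq> 0"
  shows "(\<lambda>n. - w n * (z * w n) ^ p / (1 - z * w n)) sums (deriv f z / f z - poly (pderiv Q) z)"
proof -
  define F where "F = (\<lambda>z. \<Prod>n. weierstrass_factor p (z * w n))"
  have f_eq: "f = (\<lambda>z. exp (poly Q z) * F z)" and "F z \<noteq> 0"
    using f assms(3) by (auto simp: F_def)
  have "F field_differentiable at z"
    using weierstrass_product_holomorphic[OF assms(1), of UNIV]
    unfolding F_def by (simp add: holomorphic_on_imp_differentiable_at)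
  then have "deriv f z / f z - poly (pderiv Q) z = deriv F z / F z"
    using \<open>F z \<noteq> 0\<close> by (simp add: f_eq logderiv_exp_poly_mult)
  moreover have "(\<lambda>n. - w n * (z * w n) ^ p / (1 - z * w n)) sums (deriv F z / F z)"
    using weierstrass_product_logderiv_sums[OF assms(1)] \<open>F z \<noteq> 0\<close> unfolding F_def by simp
  ultimately show ?thesis
    by simp
qed

lemma weierstrass_product_negative_zeros:
  fixes w :: "nat \<Rightarrow> complex"
  assumes "summable (\<lambda>n. norm (w n) ^ (p + 1))"
    and "\<And>z. (\<Prod>n. weierstrass_factor p (z * w n)) = 0 \<Longrightarrow> z \<in> \<real> \<and> Re z < 0"
  shows "\<exists>r. (\<forall>n. r n \<ge> 0) \<and> w = (\<lambda>n. - of_real (r n))"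
proof -
  have nonpos_real: "w n \<in> \<real> \<and> Re (w n) \<le> 0" for n
  proof (cases "w n = 0")
    case False
    then have "1 / w n * w n = 1"
      by simp
    then have "(\<Prod>k. weierstrass_factor p (1 / w n * w k)) = 0"
      using weierstrass_product_eq_0_iff[OF assms(1)] by blast
    then have "1 / w n \<in> \<real> \<and> Re (1 / w n) < 0"
      by (rule assms(2))
    then obtain y where y: "1 / w n = of_real y" "y < 0"
      by (auto elim!: Reals_cases)
    have "w n = 1 / (1 / w n)"
      by simp
    also have "\<dots> = of_real (1 / y)"
      using y(1) by simp
    finally show ?thesis
      using y(2) by simp
  qed simp
  show ?thesis
  proof (intro exI[of _ "\<lambda>n. - Re (w n)"] conjI allI ext)
    fix n
    show "0 \<le> - Re (w n)"
      using nonpos_real[of n] by simp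
    show "w n = - of_real (- Re (w n))"
      using nonpos_real[of n] by (simp add: complex_eq_iff complex_is_Real_iff)
  qed
qed

lemma weierstrass_logderiv_term_real:
  fixes r x :: real
  assumes "p \<le> 1" and "r \<ge> 0" and "x \<ge> 0"
  shows "- (- of_real r) * (of_real x * - of_real r) ^ p / (1 - of_real x * - of_real r)
           = complex_of_real (r / (1 + x * r) - of_nat p * r)"
proof -
  have "1 + x * r > 0"
    using assms by (simp add: add_pos_nonneg)
  then have "- (- r) * (x * - r) ^ p / (1 - x * - r) = r / (1 + x * r) - of_nat p * r"
    using assms(1) by (cases "p = 0") (simp_all add: le_Suc_eq field_simps)
  from arg_cong[OF this, of complex_of_real] show ?thesis
    by simp
qed

lemma nn_integral_inverse_square_Icc:
  fixes x a s :: real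
  assumes "x + a > 0" and "s \<ge> 0"
  shows "(\<integral>\<^sup>+t. ennreal (1 / (x + t) ^ 2) * indicator {a..a + s} t \<partial>lborel)
           = ennreal (1 / (x + a) - 1 / (x + a + s))"
proof -
  have "(\<integral>\<^sup>+t. ennreal (1 / (x + t) ^ 2) * indicator {a..a + s} t \<partial>lborel)
          = ennreal ((\<lambda>t. - 1 / (x + t)) (a + s) - (\<lambda>t. - 1 / (x + t)) a)"
  proof (rule nn_integral_FTC_Icc)
    fix t assume "t \<in> {a..a + s}"
    then have "x + t > 0"
      using assms(1) by auto
    then show "((\<lambda>t. - 1 / (x + t)) has_real_derivative 1 / (x + t) ^ 2) (at t)"
      by (auto intro!: derivative_eq_intros simp: power2_eq_square field_simps)
  qed (use assms(2) in auto)
  then show ?thesis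
    by (simp add: add_ac)
qed

lemma gen_stieltjes2I:
  fixes F :: "real \<Rightarrow> real" and \<mu> :: "real measure"
  assumes "sets \<mu> = sets borel" and "emeasure \<mu> {..<0} = 0"
    and "\<And>x. x > 0 \<Longrightarrow> F x \<ge> 0 \<and> (\<integral>\<^sup>+t. ennreal (1 / (x + t) ^ 2) \<partial>\<mu>) = ennreal (F x)"
  shows "gen_stieltjes2 F"
  unfolding gen_stieltjes2_def
proof (intro exI[of _ \<mu>] exI[of _ 0] conjI allI impI)
  fix x :: real assume "x > 0"
  have meas: "(\<lambda>t. 1 / (x + t) ^ 2) \<in> borel_measurable \<mu>"
    by (simp add: measurable_cong_sets[OF assms(1) refl])
  show "integrable \<mu> (\<lambda>t. 1 / (x + t) ^ 2)"
    using assms(3)[OF \<open>x > 0\<close>] by (intro integrableI_nonneg[OF meas]) auto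
  have "(\<integral>t. 1 / (x + t) ^ 2 \<partial>\<mu>) = enn2real (\<integral>\<^sup>+t. ennreal (1 / (x + t) ^ 2) \<partial>\<mu>)"
    by (rule integral_eq_nn_integral[OF meas]) simp
  then show "F x = (\<integral>t. 1 / (x + t) ^ 2 \<partial>\<mu>) + 0"
    using assms(3)[OF \<open>x > 0\<close>] by simp
qed (use assms(1,2) in auto)

lemma gen_stieltjes2_shifted_sum:
  fixes r :: "nat \<Rightarrow> real" and h :: "real \<Rightarrow> real" and s :: real
  assumes "s > 0" and r: "\<And>n. r n \<ge> 0"
    and h: "\<And>x. x > 0 \<Longrightarrow> (\<lambda>n. r n / (1 + x * r n) - r n / (1 + (x + s) * r n)) sums h x"
  shows "gen_stieltjes2 h"
proof -
  define I where "I n = (if r n > 0 then {1 / r n .. 1 / r n + s} else {})" for n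
  define g :: "real \<Rightarrow> ennreal" where "g u = (\<Sum>n. indicator (I n) u)" for u
  have I_borel: "I n \<in> sets borel" for n
    by (simp add: I_def)
  have g_borel: "g \<in> borel_measurable borel"
    unfolding g_def using I_borel by measurable
  have I_pos: "I n \<subseteq> {0<..}" for n
    by (auto simp: I_def) (meson divide_pos_pos less_le_trans zero_less_one)
  have g_neg: "g u * indicator {..<0} u = 0" for u
  proof (cases "u < 0")
    case True
    then have "u \<notin> I n" for n
      using I_pos by fastforce
    then show ?thesis
      by (simp add: g_def)
  qed simp
  show ?thesis
  proof (rule gen_stieltjes2I[of "density lborel g"])
    show "emeasure (density lborel g) {..<0} = 0"
      using g_borel by (simp add: emeasure_density g_neg)
  next
    fix x :: real assume "x > 0"
    have terms_nonneg: "0 \<le> r n / (1 + x * r n) - r n / (1 + (x + s) * r n)" for n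
    proof -
      have "r n / (1 + (x + s) * r n) \<le> r n / (1 + x * r n)"
      proof (rule divide_left_mono)
        show "1 + x * r n \<le> 1 + (x + s) * r n"
          using r[of n] \<open>s > 0\<close> by (simp add: mult_right_mono)
        show "0 < (1 + (x + s) * r n) * (1 + x * r n)"
          using r[of n] \<open>x > 0\<close> \<open>s > 0\<close>
          by (intro mult_pos_pos add_pos_nonneg mult_nonneg_nonneg) simp_all
      qed (rule r)
      then show ?thesis
        by simp
    qed
    have h_nonneg: "h x \<ge> 0"
      using terms_nonneg by (intro sums_le[OF _ sums_zero h[OF \<open>x > 0\<close>]]) simp
    have piece: "(\<integral>\<^sup>+t. ennreal (1 / (x + t) ^ 2) * indicator (I n) t \<partial>lborel)
                   = ennreal (r n / (1 + x * r n) - r n / (1 + (x + s) * r n))" for n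
    proof (cases "r n > 0")
      case True
      have "x + 1 / r n > 0"
        using True \<open>x > 0\<close> by (simp add: add_pos_pos)
      then have "(\<integral>\<^sup>+t. ennreal (1 / (x + t) ^ 2) * indicator (I n) t \<partial>lborel)
                   = ennreal (1 / (x + 1 / r n) - 1 / (x + 1 / r n + s))"
        using nn_integral_inverse_square_Icc[of x "1 / r n" s] True \<open>s > 0\<close> by (simp add: I_def)
      also have "1 / (x + 1 / r n) - 1 / (x + 1 / r n + s)
                   = r n / (1 + x * r n) - r n / (1 + (x + s) * r n)"
        using True \<open>x > 0\<close> \<open>s > 0\<close> by (simp add: field_simps)
      finally show ?thesis .
    next
      case False
      with r[of n] show ?thesis
        by (simp add: I_def)
    qed
    have "(\<integral>\<^sup>+t. ennreal (1 / (x + t) ^ 2) \<partial>density lborel g)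
            = (\<integral>\<^sup>+t. (\<Sum>n. ennreal (1 / (x + t) ^ 2) * indicator (I n) t) \<partial>lborel)"
      using g_borel by (simp add: nn_integral_density g_def ennreal_suminf_cmult mult.commute)
    also have "\<dots> = (\<Sum>n. \<integral>\<^sup>+t. ennreal (1 / (x + t) ^ 2) * indicator (I n) t \<partial>lborel)"
      by (rule nn_integral_suminf) (use I_borel in measurable)
    also have "\<dots> = (\<Sum>n. ennreal (r n / (1 + x * r n) - r n / (1 + (x + s) * r n)))"
      by (simp only: piece)
    also have "\<dots> = ennreal (h x)"
      using h[OF \<open>x > 0\<close>] terms_nonneg by (subst suminf_ennreal2) (auto simp: sums_iff)
    finally show "h x \<ge> 0 \<and>
        (\<integral>\<^sup>+t. ennreal (1 / (x + t) ^ 2) \<partial>density lborel g) = ennreal (h x)"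
      using h_nonneg by simp
  qed simp
qed

lemma genus_le_1_negative_zeros_factorization:
  fixes f :: "complex \<Rightarrow> complex"
  assumes "has_genus f 1" and "\<forall>z. f z = 0 \<longrightarrow> z \<in> \<real> \<and> Re z < 0"
    and "f 0 \<noteq> 0"
  obtains p Q c w r
  where "p \<le> 1" and "pderiv Q = [:c:]" and "summable (\<lambda>n. norm (w n) ^ (p + 1))"
    and "\<And>z. f z = exp (poly Q z) * (\<Prod>n. weierstrass_factor p (z * w n))"
    and "\<And>n. r n \<ge> 0" and "w = (\<lambda>n. - of_real (r n))"
proof -
  obtain m Q w p where summable: "summable (\<lambda>n. norm (w n) ^ (p + 1))"
    and f_eq: "\<forall>z. f z = z ^ m * exp (poly Q z) * (\<Prod>n. weierstrass_factor p (z * w n))"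
    and genus: "1 = max p (degree Q)"
    using assms(1) unfolding has_genus_def by blast
  have "m = 0"
    using f_eq assms(3) by (cases m) auto
  then have f: "f z = exp (poly Q z) * (\<Prod>n. weierstrass_factor p (z * w n))" for z
    using f_eq by simp
  have "z \<in> \<real> \<and> Re z < 0" if "(\<Prod>n. weierstrass_factor p (z * w n)) = 0" for z
    using assms(2) that by (simp add: f)
  then obtain r where r: "\<And>n. r n \<ge> 0" and w: "w = (\<lambda>n. - of_real (r n))"
    using weierstrass_product_negative_zeros[OF summable] by blast
  have "p \<le> 1" and "degree (pderiv Q) = 0"
    using genus by (simp_all add: degree_pderiv)
  then obtain c where "pderiv Q = [:c:]"
    by (auto elim: degree_eq_zeroE)
  show ?thesis
    by (rule that[OF \<open>p \<le> 1\<close> \<open>pderiv Q = [:c:]\<close> summable f r w])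
qed

theorem corollary4p10:
  fixes f :: "complex \<Rightarrow> complex" and s :: real
  assumes "real_entire f"
    and "has_genus f 1"
    and "\<forall>z. f z = 0 \<longrightarrow> z \<in> \<real> \<and> Re z < 0"
    and "Re (f 0) > 0"
    and "s > 0"
  shows "gen_stieltjes2 (\<lambda>x. Re (deriv f (of_real x) / f (of_real x)
                               - deriv f (of_real (x + s)) / f (of_real (x + s))))"
proof -
  have "f 0 \<noteq> 0"
    using assms(4) by auto
  obtain p Q c w r where "p \<le> 1" and Q': "pderiv Q = [:c:]"
    and summable: "summable (\<lambda>n. norm (w n) ^ (p + 1))"
    and f: "\<And>z. f z = exp (poly Q z) * (\<Prod>n. weierstrass_factor p (z * w n))"
    and r: "\<And>n. r n \<ge> 0" and w: "w = (\<lambda>n. - of_real (r n))"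
    using genus_le_1_negative_zeros_factorization[OF assms(2,3) \<open>f 0 \<noteq> 0\<close>] by blast
  have logderiv: "(\<lambda>n. complex_of_real (r n / (1 + x * r n) - of_nat p * r n))
                    sums (deriv f (of_real x) / f (of_real x) - c)" if "x > 0" for x
  proof -
    have "f (of_real x) \<noteq> 0"
      using assms(3) that by force
    then have "(\<lambda>n. - w n * (of_real x * w n) ^ p / (1 - of_real x * w n))
                 sums (deriv f (of_real x) / f (of_real x) - poly (pderiv Q) (of_real x))"
      by (rule logderiv_exp_poly_weierstrass_product_sums[OF summable f])
    moreover have "- w n * (of_real x * w n) ^ p / (1 - of_real x * w n)
                     = of_real (r n / (1 + x * r n) - of_nat p * r n)" for n
      using weierstrass_logderiv_term_real[OF \<open>p \<le> 1\<close> r, of x] that by (simp add: w)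
    ultimately show ?thesis
      by (simp only: Q') simp
  qed
  have "(\<lambda>n. r n / (1 + x * r n) - r n / (1 + (x + s) * r n)) sums
          Re (deriv f (of_real x) / f (of_real x) - deriv f (of_real (x + s)) / f (of_real (x + s)))"
    if "x > 0" for x
  proof -
    have "x + s > 0"
      using that assms(5) by simp
    from sums_Re[OF sums_diff[OF logderiv[OF that] logderiv[OF this]]] show ?thesis
      by simp
  qed
  then show ?thesis
    by (rule gen_stieltjes2_shifted_sum[OF assms(5) r])
qed

end
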